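(* Let $\mathcal{X}$ and $\mathcal{Y}$ be arbitrary finite alphabets with $|\mathcal{X}|\geq 2$ and $|\mathcal{Y}|\geq 2$. Let $\mathcal{M}(\mathcal{X},\mathcal{Y})$ be the set of all functions $F_{\mathrm{opt}}$ which take as input a computable source distribution $P_X\in\mathcal{P}_{\mathrm{c}}(\mathcal{X})$, a computable distortion measure $d:\mathcal{X}\times\mathcal{Y}\to\mathbb{R}_{\geq0,\mathrm{c}}$ and a computable distortion level $D\in\mathbb{R}_{\mathrm{c}}$, and output some optimal test channel $P^{*}_{Y|X}\in\mathcal{P}_{\mathrm{opt}}(d,D,P_X)$. Then, provided the source probability $P_X$ is non-trivial, there exists no function $F_{\mathrm{opt}}\in\mathcal{M}(\mathcal{X},\mathcal{Y})$ that is Banach–Mazur computable (and hence none that is Turing computable).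
   Context: A real number $x$ is computable if there are recursive functions producing a sequence of rationals $r_k$ and a recursive modulus $e$ with $|x-r_k|\leq 2^{-N}$ for all $k\geq e(N)$; $\mathbb{R}_{\mathrm{c}}$ denotes the computable reals, and a sequence of reals (or of finite tuples/matrices of reals) is computable if the approximating rationals and modulus can be given uniformly by recursive functions of the index. $\mathcal{P}_{\mathrm{c}}(\mathcal{X})$ denotes the probability distributions on $\mathcal{X}$ with computable entries, and $\mathbb{R}_{\geq0,\mathrm{c}}$ the non-negative computable reals. A distortion measure is a function $d:\mathcal{X}\times\mathcal{Y}\to\mathbb{R}_{\geq 0}$. For a source distribution $P_X$, distortion measure $d$ and level $D$, the rate distortion function is $R(D)=\inf\{I(X;Y): P_{Y|X},\ \sum_{x,y}P_X(x)P_{Y|X}(y|x)d(x,y)\leq D\}$, the infimum over all transition probability matrices (test channels) $P_{Y|X}$, with $I(X;Y)$ the mutual information of the joint distribution $P_X P_{Y|X}$; $\mathcal{P}_{\mathrm{opt}}(d,D,P_X)$ is the set of test channels attaining this minimum. A function $F$ defined on tuples of computable reals (here $(P_X,d,D)$) with values in tuples of reals (here transition matrices) is Banach–Mazur computable if it maps every computable sequence of inputs to a computable sequence of outputs. *)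

theory Defs
  imports Complex_Main
begin

fun primrec_fn :: "(nat list \<Rightarrow> nat) \<Rightarrow> (nat list \<Rightarrow> nat) \<Rightarrow> nat \<Rightarrow> nat list \<Rightarrow> nat" where
  "primrec_fn g h 0 xs = g xs"
| "primrec_fn g h (Suc y) xs = h (y # primrec_fn g h y xs # xs)"

text \<open>recfn n f: f is a (total) recursive function of arity n (only its values on
  argument lists of length n matter).\<close>
inductive recfn :: "nat \<Rightarrow> (nat list \<Rightarrow> nat) \<Rightarrow> bool" where
  rf_zero: "recfn n (\<lambda>_. 0)"
| rf_succ: "recfn 1 (\<lambda>xs. Suc (hd xs))"
| rf_proj: "i < n \<Longrightarrow> recfn n (\<lambda>xs. xs ! i)"
| rf_comp: "recfn m g \<Longrightarrow> length fs = m \<Longrightarrow> (\<forall>i<m. recfn n (fs ! i))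
            \<Longrightarrow> recfn n (\<lambda>xs. g (map (\<lambda>f. f xs) fs))"
| rf_prim: "recfn n g \<Longrightarrow> recfn (Suc (Suc n)) h
            \<Longrightarrow> recfn (Suc n) (\<lambda>xs. primrec_fn g h (hd xs) (tl xs))"
| rf_mu: "recfn (Suc n) g \<Longrightarrow> (\<forall>xs. length xs = n \<longrightarrow> (\<exists>y. g (y # xs) = 0))
            \<Longrightarrow> recfn n (\<lambda>xs. LEAST y. g (y # xs) = 0)"
| rf_ext: "recfn n f \<Longrightarrow> (\<forall>xs. length xs = n \<longrightarrow> f' xs = f xs) \<Longrightarrow> recfn n f'"

definition recursive2 :: "(nat \<Rightarrow> nat \<Rightarrow> nat) \<Rightarrow> bool" where
  "recursive2 f \<longleftrightarrow> recfn 2 (\<lambda>xs. f (xs ! 0) (xs ! 1))"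

definition rat_code :: "nat \<Rightarrow> nat \<Rightarrow> nat \<Rightarrow> real" where
  "rat_code s a b = (-1) ^ s * real a / real (Suc b)"

definition computable_seq :: "(nat \<Rightarrow> real) \<Rightarrow> bool" where
  "computable_seq x \<longleftrightarrow> (\<exists>s a b e. recursive2 s \<and> recursive2 a \<and> recursive2 b \<and> recursive2 e \<and>
      (\<forall>n N k. e n N \<le> k \<longrightarrow> \<bar>x n - rat_code (s n k) (a n k) (b n k)\<bar> \<le> 1 / 2 ^ N))"

definition computable_real :: "real \<Rightarrow> bool" where
  "computable_real r \<longleftrightarrow> computable_seq (\<lambda>_. r)"

definition is_pmf :: "('x::finite \<Rightarrow> real) \<Rightarrow> bool" where
  "is_pmf P \<longleftrightarrow> (\<forall>x. 0 \<le> P x) \<and> (\<Sum>x\<in>UNIV. P x) = 1"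

definition nontrivial_pmf :: "('x::finite \<Rightarrow> real) \<Rightarrow> bool" where
  "nontrivial_pmf P \<longleftrightarrow> (\<forall>x. P x \<noteq> 1)"

definition test_channel :: "('x::finite \<Rightarrow> 'y::finite \<Rightarrow> real) \<Rightarrow> bool" where
  "test_channel W \<longleftrightarrow> (\<forall>x y. 0 \<le> W x y) \<and> (\<forall>x. (\<Sum>y\<in>UNIV. W x y) = 1)"

definition out_dist :: "('x::finite \<Rightarrow> real) \<Rightarrow> ('x \<Rightarrow> 'y \<Rightarrow> real) \<Rightarrow> 'y \<Rightarrow> real" where
  "out_dist P W y = (\<Sum>x\<in>UNIV. P x * W x y)"

definition mutual_info :: "('x::finite \<Rightarrow> real) \<Rightarrow> ('x \<Rightarrow> 'y::finite \<Rightarrow> real) \<Rightarrow> real" where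
  "mutual_info P W = (\<Sum>x\<in>UNIV. \<Sum>y\<in>UNIV.
      (if P x * W x y = 0 then 0 else P x * W x y * log 2 (W x y / out_dist P W y)))"

definition avg_distortion :: "('x::finite \<Rightarrow> real) \<Rightarrow> ('x \<Rightarrow> 'y::finite \<Rightarrow> real) \<Rightarrow> ('x \<Rightarrow> 'y \<Rightarrow> real) \<Rightarrow> real" where
  "avg_distortion P W d = (\<Sum>x\<in>UNIV. \<Sum>y\<in>UNIV. P x * W x y * d x y)"

definition P_opt :: "('x::finite \<Rightarrow> 'y::finite \<Rightarrow> real) \<Rightarrow> real \<Rightarrow> ('x \<Rightarrow> real) \<Rightarrow> ('x \<Rightarrow> 'y \<Rightarrow> real) set" where
  "P_opt d D P = {W. test_channel W \<and> avg_distortion P W d \<le> D \<and>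
      (\<forall>W'. test_channel W' \<and> avg_distortion P W' d \<le> D \<longrightarrow> mutual_info P W \<le> mutual_info P W')}"

definition admissible_input :: "('x::finite \<Rightarrow> real) \<Rightarrow> ('x \<Rightarrow> 'y::finite \<Rightarrow> real) \<Rightarrow> real \<Rightarrow> bool" where
  "admissible_input P d D \<longleftrightarrow> is_pmf P \<and> nontrivial_pmf P \<and> (\<forall>x. computable_real (P x)) \<and>
     (\<forall>x y. 0 \<le> d x y \<and> computable_real (d x y)) \<and> computable_real D \<and> P_opt d D P \<noteq> {}"

definition M_opt :: "(('x::finite \<Rightarrow> real) \<Rightarrow> ('x \<Rightarrow> 'y::finite \<Rightarrow> real) \<Rightarrow> real \<Rightarrow> ('x \<Rightarrow> 'y \<Rightarrow> real)) set" where
  "M_opt = {F. \<forall>P d D. admissible_input P d D \<longrightarrow> F P d D \<in> P_opt d D P}"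

text \<open>Banach-Mazur computability on admissible inputs: every computable sequence of
  admissible inputs is mapped to a computable sequence of matrices (componentwise; over
  finite index types componentwise computability is equivalent to uniform computability).\<close>
definition BM_computable :: "(('x::finite \<Rightarrow> real) \<Rightarrow> ('x \<Rightarrow> 'y::finite \<Rightarrow> real) \<Rightarrow> real \<Rightarrow> ('x \<Rightarrow> 'y \<Rightarrow> real)) \<Rightarrow> bool" where
  "BM_computable F \<longleftrightarrow>
     (\<forall>(P :: nat \<Rightarrow> 'x \<Rightarrow> real) (d :: nat \<Rightarrow> 'x \<Rightarrow> 'y \<Rightarrow> real) (D :: nat \<Rightarrow> real).
        (\<forall>n. admissible_input (P n) (d n) (D n)) \<and>
        (\<forall>x. computable_seq (\<lambda>n. P n x)) \<and> (\<forall>x y. computable_seq (\<lambda>n. d n x y)) \<and>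
        computable_seq D
        \<longrightarrow> (\<forall>x y. computable_seq (\<lambda>n. F (P n) (d n) (D n) x y)))"

end

(* At distortion level 0 an optimal test channel may only use zero-distortion letters.
   Take the uniform source on two letters x0, x1 and let reproducing y0 cost alpha_n,
   reproducing y1 cost beta_n and every other letter cost 1, where
   alpha_n = sum_k 2^-(k+1) [machine n on input n has halted with output 1 after k steps]
   and beta_n is the same with output 0. Both sequences are computable, at most one of
   alpha_n, beta_n is nonzero, and every optimal channel W has W(x0,y0) = 0 if alpha_n > 0
   and W(x0,y0) = 1 if beta_n > 0. A Banach-Mazur computable selector would therefore yield
   a recursive set separating {n. phi_n(n) = 1} from {n. phi_n(n) = 0}, contradicting
   diagonalisation. To speak about "machine n" for the inductively defined recursive
   functions, a universal stack machine with a recursive step function is built first. *)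

theory Submission
  imports Defs "HOL-Library.Nat_Bijection"
begin

section \<open>Cantor pairing and list codes\<close>

abbreviation pair :: "nat \<Rightarrow> nat \<Rightarrow> nat" where
  "pair a b \<equiv> prod_encode (a, b)"

abbreviation unpair1 :: "nat \<Rightarrow> nat" where
  "unpair1 z \<equiv> fst (prod_decode z)"

abbreviation unpair2 :: "nat \<Rightarrow> nat" where
  "unpair2 z \<equiv> snd (prod_decode z)"

abbreviation code_cons :: "nat \<Rightarrow> nat \<Rightarrow> nat" where
  "code_cons x l \<equiv> Suc (pair x l)"

abbreviation code_hd :: "nat \<Rightarrow> nat" where
  "code_hd z \<equiv> unpair1 (z - 1)"

abbreviation code_tl :: "nat \<Rightarrow> nat" where
  "code_tl z \<equiv> unpair2 (z - 1)"

definition code_nth :: "nat \<Rightarrow> nat \<Rightarrow> nat" where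
  "code_nth l i = code_hd (((\<lambda>z. code_tl z) ^^ i) l)"

lemma code_nth_list_encode: "i < length xs \<Longrightarrow> code_nth (list_encode xs) i = xs ! i"
proof (induction xs arbitrary: i)
  case (Cons x xs)
  then show ?case
    by (cases i) (simp_all add: code_nth_def funpow_Suc_right del: funpow.simps)
qed simp

lemma triangle_mono: "m \<le> n \<Longrightarrow> triangle m \<le> triangle n"
  by (induction n rule: dec_induct) auto

definition triangle_root :: "nat \<Rightarrow> nat" where
  "triangle_root z = (LEAST s. z < triangle (Suc s))"

lemma prod_decode_triangle_root:
  "prod_decode z = (z - triangle (triangle_root z), triangle_root z - (z - triangle (triangle_root z)))"
proof -
  obtain m n where mn: "prod_decode z = (m, n)" by (cases "prod_decode z")
  then have z: "z = triangle (m + n) + m"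
    using prod_decode_inverse[of z] by (simp add: prod_encode_def)
  have "triangle_root z = m + n"
    unfolding triangle_root_def
  proof (rule Least_equality)
    show "z < triangle (Suc (m + n))" using z by simp
    fix s' assume "z < triangle (Suc s')"
    then have "triangle (m + n) < triangle (Suc s')" using z by simp
    then show "m + n \<le> s'" using triangle_mono[of "Suc s'" "m + n"] by linarith
  qed
  then show ?thesis using mn z by simp
qed

section \<open>Closure properties of recursive functions\<close>

lemma recfn_compose1:
  assumes "recfn 1 (\<lambda>ys. g (ys!0))" "recfn n f"
  shows "recfn n (\<lambda>xs. g (f xs))"
proof -
  have "recfn n (\<lambda>xs. (\<lambda>ys. g (ys!0)) (map (\<lambda>f. f xs) [f]))"
    by (rule rf_comp[OF assms(1)]) (use assms in auto)
  then show ?thesis by simp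
qed

lemma recfn_compose2:
  assumes "recfn 2 (\<lambda>ys. g (ys!0) (ys!1))" "recfn n f1" "recfn n f2"
  shows "recfn n (\<lambda>xs. g (f1 xs) (f2 xs))"
proof -
  have "recfn n (\<lambda>xs. (\<lambda>ys. g (ys!0) (ys!1)) (map (\<lambda>f. f xs) [f1, f2]))"
    by (rule rf_comp[OF assms(1)]) (use assms in \<open>auto simp: less_2_cases_iff\<close>)
  then show ?thesis by simp
qed

lemma recfn_compose3:
  assumes "recfn 3 (\<lambda>ys. g (ys!0) (ys!1) (ys!2))" "recfn n f1" "recfn n f2" "recfn n f3"
  shows "recfn n (\<lambda>xs. g (f1 xs) (f2 xs) (f3 xs))"
proof -
  have "recfn n (\<lambda>xs. (\<lambda>ys. g (ys!0) (ys!1) (ys!2)) (map (\<lambda>f. f xs) [f1, f2, f3]))"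
  proof (rule rf_comp[OF assms(1)])
    show "\<forall>i<3. recfn n ([f1, f2, f3] ! i)"
      using assms by (auto simp: nth_Cons' eval_nat_numeral)
  qed simp
  then show ?thesis by simp
qed

lemma recursive2_compose:
  "recursive2 g \<Longrightarrow> recfn n f1 \<Longrightarrow> recfn n f2 \<Longrightarrow> recfn n (\<lambda>xs. g (f1 xs) (f2 xs))"
  unfolding recursive2_def by (rule recfn_compose2)

lemma recfn_Suc: "recfn n f \<Longrightarrow> recfn n (\<lambda>xs. Suc (f xs))"
proof (rule recfn_compose1[where g = Suc])
  show "recfn 1 (\<lambda>ys. Suc (ys!0))"
    by (rule rf_ext[OF rf_succ]) (auto simp: length_Suc_conv)
qed

lemma recfn_const: "recfn n (\<lambda>_. c)"
  by (induction c) (auto intro: rf_zero recfn_Suc)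

text \<open>The arities are passed through equations so that the rule applies at numerals
  (\<open>1, 2, 3\<close>), which the simplifier would otherwise rewrite to \<open>Suc\<close> terms.\<close>
lemma recfn_primrec_eq:
  assumes "recfn n g" "recfn k h" "k = n + 2" "m = n + 1"
    and "\<And>xs. length xs = m \<Longrightarrow> f xs = primrec_fn g h (hd xs) (tl xs)"
  shows "recfn m f"
  using rf_ext[OF rf_prim[OF assms(1)]] assms(2-5) by simp

lemma length_2_cases:
  assumes "length xs = 2"
  obtains a b where "xs = [a, b]"
  using assms by (cases xs; cases "tl xs") auto

lemma length_3_cases:
  assumes "length xs = 3"
  obtains a b c where "xs = [a, b, c]"
  using assms by (cases xs; cases "tl xs"; cases "tl (tl xs)") auto

lemma recfn_funpow:
  assumes "recfn 1 (\<lambda>ys. f (ys!0))" "recfn n a" "recfn n b"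
  shows "recfn n (\<lambda>xs. (f ^^ a xs) (b xs))"
proof (rule recfn_compose2[where g = "\<lambda>a b. (f ^^ a) b", OF _ assms(2,3)])
  have step: "recfn 3 (\<lambda>ys. f (ys!1))"
    by (rule recfn_compose1[OF assms(1) rf_proj]) simp
  have unfold: "primrec_fn (\<lambda>ys. ys!0) (\<lambda>ys. f (ys!1)) y zs = (f ^^ y) (zs!0)" for y zs
    by (induction y) auto
  show "recfn 2 (\<lambda>ys. (f ^^ (ys!0)) (ys!1))"
  proof (rule recfn_primrec_eq[where n = 1])
    show "recfn 1 (\<lambda>ys. ys!0)" by (rule rf_proj) simp
    show "recfn 3 (\<lambda>ys. f (ys!1))" by (rule step)
    fix xs :: "nat list" assume "length xs = 2"
    then show "(f ^^ (xs!0)) (xs!1) = primrec_fn (\<lambda>ys. ys!0) (\<lambda>ys. f (ys!1)) (hd xs) (tl xs)"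
      by (cases rule: length_2_cases) (simp add: unfold[simplified])
  qed simp_all
qed

lemma recfn_add: "recfn n f \<Longrightarrow> recfn n g \<Longrightarrow> recfn n (\<lambda>xs. f xs + g xs)"
proof (rule recfn_compose2[where g = plus])
  have "recfn 2 (\<lambda>ys. (Suc ^^ (ys!0)) (ys!1))"
    by (intro recfn_funpow recfn_Suc rf_proj) simp_all
  moreover have "(Suc ^^ a) b = a + b" for a b
    by (induction a) auto
  ultimately show "recfn 2 (\<lambda>ys. ys!0 + ys!1)" by simp
qed

lemma recfn_pred: "recfn n f \<Longrightarrow> recfn n (\<lambda>xs. f xs - 1)"
proof (rule recfn_compose1[where g = "\<lambda>a. a - 1"])
  have unfold: "primrec_fn (\<lambda>_. 0) (\<lambda>ys. ys!0) y zs = y - 1" for y zs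
    by (cases y) auto
  show "recfn 1 (\<lambda>ys. ys!0 - 1)"
    by (rule recfn_primrec_eq[where n = 0, OF rf_zero rf_proj]) (auto simp: length_Suc_conv unfold[simplified])
qed

lemma recfn_diff: "recfn n f \<Longrightarrow> recfn n g \<Longrightarrow> recfn n (\<lambda>xs. f xs - g xs)"
proof (rule recfn_compose2[where g = minus])
  have "recfn 2 (\<lambda>ys. ((\<lambda>z. z - 1) ^^ (ys!1)) (ys!0))"
    by (intro recfn_funpow recfn_pred rf_proj) simp_all
  moreover have "((\<lambda>z. z - 1) ^^ b) a = a - b" for a b :: nat
    by (induction b) auto
  ultimately show "recfn 2 (\<lambda>ys. ys!0 - ys!1)" by simp
qed

lemma recfn_if_zero:
  assumes "recfn n c" "recfn n f" "recfn n g"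
  shows "recfn n (\<lambda>xs. if c xs = 0 then f xs else g xs)"
proof (rule recfn_compose3[where g = "\<lambda>c a b. if c = 0 then a else b", OF _ assms])
  have unfold: "primrec_fn (\<lambda>ys. ys!0) (\<lambda>ys. ys!3) y zs = (if y = 0 then zs!0 else zs!1)" for y zs
    by (cases y) (simp_all add: eval_nat_numeral)
  show "recfn 3 (\<lambda>ys. if ys!0 = 0 then ys!1 else ys!2)"
  proof (rule recfn_primrec_eq[where n = 2])
    show "recfn 2 (\<lambda>ys. ys!0)" by (rule rf_proj) simp
    show "recfn 4 (\<lambda>ys. ys!3)" by (rule rf_proj) simp
    fix xs :: "nat list" assume "length xs = 3"
    then show "(if xs!0 = 0 then xs!1 else xs!2) = primrec_fn (\<lambda>ys. ys!0) (\<lambda>ys. ys!3) (hd xs) (tl xs)"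
      by (cases rule: length_3_cases) (simp add: unfold)
  qed simp_all
qed

lemma recfn_if_eq:
  assumes "recfn n a" "recfn n b" "recfn n f" "recfn n g"
  shows "recfn n (\<lambda>xs. if a xs = b xs then f xs else g xs)"
proof -
  have "recfn n (\<lambda>xs. if (a xs - b xs) + (b xs - a xs) = 0 then f xs else g xs)"
    by (intro recfn_if_zero recfn_add recfn_diff assms)
  moreover have "(a xs - b xs) + (b xs - a xs) = 0 \<longleftrightarrow> a xs = b xs" for xs
    by auto
  ultimately show ?thesis by simp
qed

lemma recfn_triangle: "recfn n f \<Longrightarrow> recfn n (\<lambda>xs. triangle (f xs))"
proof (rule recfn_compose1[where g = triangle])
  have step: "recfn 2 (\<lambda>ys. Suc (ys!1 + ys!0))"
    by (intro recfn_Suc recfn_add rf_proj) simp_all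
  have unfold: "primrec_fn (\<lambda>_. 0) (\<lambda>ys. Suc (ys!1 + ys!0)) y zs = triangle y" for y zs
    by (induction y) auto
  show "recfn 1 (\<lambda>ys. triangle (ys!0))"
    by (rule recfn_primrec_eq[where n = 0, OF rf_zero step]) (auto simp: length_Suc_conv unfold[simplified])
qed

lemma recfn_prod_encode: "recfn n f \<Longrightarrow> recfn n g \<Longrightarrow> recfn n (\<lambda>xs. prod_encode (f xs, g xs))"
  unfolding prod_encode_def by (simp add: recfn_add recfn_triangle)

lemma recfn_triangle_root: "recfn n f \<Longrightarrow> recfn n (\<lambda>xs. triangle_root (f xs))"
proof (rule recfn_compose1[where g = triangle_root])
  have "recfn 1 (\<lambda>xs. LEAST s. Suc ((s # xs)!1) - triangle (Suc ((s # xs)!0)) = 0)"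
  proof (rule rf_mu)
    show "recfn (Suc 1) (\<lambda>ys. Suc (ys!1) - triangle (Suc (ys!0)))"
      by (intro recfn_diff recfn_Suc recfn_triangle rf_proj) simp_all
    show "\<forall>xs. length xs = 1 \<longrightarrow> (\<exists>s. Suc ((s # xs)!1) - triangle (Suc ((s # xs)!0)) = 0)"
    proof (intro allI impI)
      fix xs :: "nat list"
      show "\<exists>s. Suc ((s # xs)!1) - triangle (Suc ((s # xs)!0)) = 0"
        by (intro exI[of _ "xs!0"]) simp
    qed
  qed
  moreover have "(Suc z - t = 0) = (z < t)" for z t :: nat
    by auto
  ultimately show "recfn 1 (\<lambda>ys. triangle_root (ys!0))"
    by (simp only: triangle_root_def nth_Cons_0 nth_Cons_Suc One_nat_def)
qed

lemma recfn_unpair1: "recfn n f \<Longrightarrow> recfn n (\<lambda>xs. unpair1 (f xs))"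
  by (simp add: prod_decode_triangle_root recfn_diff recfn_triangle recfn_triangle_root)

lemma recfn_unpair2: "recfn n f \<Longrightarrow> recfn n (\<lambda>xs. unpair2 (f xs))"
  by (simp add: prod_decode_triangle_root recfn_diff recfn_triangle recfn_triangle_root)

lemma recfn_code_nth: "recfn n f \<Longrightarrow> recfn n g \<Longrightarrow> recfn n (\<lambda>xs. code_nth (f xs) (g xs))"
  unfolding code_nth_def
  by (intro recfn_unpair1 recfn_pred recfn_funpow[where f = "\<lambda>z. code_tl z"] recfn_unpair2 rf_proj)
    simp_all

section \<open>A universal machine for recursive functions\<close>

text \<open>A configuration \<open>pair T S\<close> consists of a list code \<open>T\<close> of pending tasks and a
  list code \<open>S\<close> of frames, each frame a list code of computed values; results are pushed
  onto the top frame. A configuration with \<open>T = 0\<close> is halted. \<open>task_spread\<close> evaluates a list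
  of codes on one argument list into a fresh frame, which \<open>task_apply\<close> then hands to the outer
  function; \<open>task_prim\<close> and \<open>task_mu\<close> are the continuations of primitive recursion and of
  the unbounded search.\<close>

definition code_zero :: nat where "code_zero = pair 0 0"
definition code_succ :: nat where "code_succ = pair 1 0"
definition code_proj :: "nat \<Rightarrow> nat" where "code_proj i = pair 2 i"
definition code_comp :: "nat \<Rightarrow> nat \<Rightarrow> nat" where "code_comp g fs = pair 3 (pair g fs)"
definition code_prim :: "nat \<Rightarrow> nat \<Rightarrow> nat" where "code_prim g h = pair 4 (pair g h)"
definition code_mu :: "nat \<Rightarrow> nat" where "code_mu g = pair 5 g"

definition task_eval :: "nat \<Rightarrow> nat \<Rightarrow> nat" where "task_eval c xs = pair 0 (pair c xs)"
definition task_spread :: "nat \<Rightarrow> nat \<Rightarrow> nat" where "task_spread cs xs = pair 1 (pair cs xs)"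
definition task_apply :: "nat \<Rightarrow> nat" where "task_apply g = pair 2 g"
definition task_prim :: "nat \<Rightarrow> nat \<Rightarrow> nat \<Rightarrow> nat" where "task_prim h y xs = pair 3 (pair h (pair y xs))"
definition task_mu :: "nat \<Rightarrow> nat \<Rightarrow> nat \<Rightarrow> nat" where "task_mu g y xs = pair 4 (pair g (pair y xs))"

definition push_value :: "nat \<Rightarrow> nat \<Rightarrow> nat" where
  "push_value v S = code_cons (code_cons v (code_hd S)) (code_tl S)"

definition drop_value :: "nat \<Rightarrow> nat" where
  "drop_value S = code_cons (code_tl (code_hd S)) (code_tl S)"

definition eval_step :: "nat \<Rightarrow> nat \<Rightarrow> nat \<Rightarrow> nat \<Rightarrow> nat" where
  "eval_step c xs T S =
    (if unpair1 c = 0 then pair T (push_value 0 S)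
     else if unpair1 c = 1 then pair T (push_value (Suc (code_hd xs)) S)
     else if unpair1 c = 2 then pair T (push_value (code_nth xs (unpair2 c)) S)
     else if unpair1 c = 3 then
       pair (code_cons (task_spread (unpair2 (unpair2 c)) xs) (code_cons (task_apply (unpair1 (unpair2 c))) T))
         (code_cons 0 S)
     else if unpair1 c = 4 then
       (if code_hd xs = 0 then pair (code_cons (task_eval (unpair1 (unpair2 c)) (code_tl xs)) T) S
        else pair (code_cons (task_eval c (code_cons (code_hd xs - 1) (code_tl xs)))
                     (code_cons (task_prim (unpair2 (unpair2 c)) (code_hd xs - 1) (code_tl xs)) T)) S)
     else pair (code_cons (task_eval (unpair2 c) (code_cons 0 xs)) (code_cons (task_mu (unpair2 c) 0 xs) T)) S)"

definition spread_step :: "nat \<Rightarrow> nat \<Rightarrow> nat \<Rightarrow> nat \<Rightarrow> nat" where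
  "spread_step cs xs T S =
    (if cs = 0 then pair T S
     else pair (code_cons (task_spread (code_tl cs) xs) (code_cons (task_eval (code_hd cs) xs) T)) S)"

definition prim_step :: "nat \<Rightarrow> nat \<Rightarrow> nat \<Rightarrow> nat \<Rightarrow> nat \<Rightarrow> nat" where
  "prim_step h y xs T S =
    pair (code_cons (task_eval h (code_cons y (code_cons (code_hd (code_hd S)) xs))) T) (drop_value S)"

definition mu_step :: "nat \<Rightarrow> nat \<Rightarrow> nat \<Rightarrow> nat \<Rightarrow> nat \<Rightarrow> nat" where
  "mu_step g y xs T S =
    (if code_hd (code_hd S) = 0 then pair T (push_value y (drop_value S))
     else pair (code_cons (task_eval g (code_cons (Suc y) xs)) (code_cons (task_mu g (Suc y) xs) T))
            (drop_value S))"

definition task_step :: "nat \<Rightarrow> nat \<Rightarrow> nat \<Rightarrow> nat" where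
  "task_step t T S =
    (if unpair1 t = 0 then eval_step (unpair1 (unpair2 t)) (unpair2 (unpair2 t)) T S
     else if unpair1 t = 1 then spread_step (unpair1 (unpair2 t)) (unpair2 (unpair2 t)) T S
     else if unpair1 t = 2 then pair (code_cons (task_eval (unpair2 t) (code_hd S)) T) (code_tl S)
     else if unpair1 t = 3 then
       prim_step (unpair1 (unpair2 t)) (unpair1 (unpair2 (unpair2 t))) (unpair2 (unpair2 (unpair2 t))) T S
     else mu_step (unpair1 (unpair2 t)) (unpair1 (unpair2 (unpair2 t))) (unpair2 (unpair2 (unpair2 t))) T S)"

definition step :: "nat \<Rightarrow> nat" where
  "step z = (if unpair1 z = 0 then z else task_step (code_hd (unpair1 z)) (code_tl (unpair1 z)) (unpair2 z))"

lemma recfn_step: "recfn 1 (\<lambda>xs. step (xs!0))"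
  unfolding step_def task_step_def eval_step_def spread_step_def prim_step_def mu_step_def
    task_eval_def task_spread_def task_apply_def task_prim_def task_mu_def push_value_def drop_value_def
  by (intro recfn_if_zero recfn_if_eq recfn_prod_encode recfn_unpair1 recfn_unpair2 recfn_Suc
      recfn_pred recfn_code_nth recfn_const rf_proj) simp_all

lemma step_simps:
  shows "step (pair (code_cons (task_eval code_zero xs) T) (code_cons v S))
      = pair T (code_cons (code_cons 0 v) S)"
    and "step (pair (code_cons (task_eval code_succ xs) T) (code_cons v S))
      = pair T (code_cons (code_cons (Suc (code_hd xs)) v) S)"
    and "step (pair (code_cons (task_eval (code_proj i) xs) T) (code_cons v S))
      = pair T (code_cons (code_cons (code_nth xs i) v) S)"
    and "step (pair (code_cons (task_eval (code_comp g cs) xs) T) S)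
      = pair (code_cons (task_spread cs xs) (code_cons (task_apply g) T)) (code_cons 0 S)"
    and "step (pair (code_cons (task_eval (code_prim g h) (code_cons 0 xs)) T) S)
      = pair (code_cons (task_eval g xs) T) S"
    and "step (pair (code_cons (task_eval (code_prim g h) (code_cons (Suc y) xs)) T) S)
      = pair (code_cons (task_eval (code_prim g h) (code_cons y xs)) (code_cons (task_prim h y xs) T)) S"
    and "step (pair (code_cons (task_eval (code_mu g) xs) T) S)
      = pair (code_cons (task_eval g (code_cons 0 xs)) (code_cons (task_mu g 0 xs) T)) S"
    and "step (pair (code_cons (task_spread 0 xs) T) S) = pair T S"
    and "step (pair (code_cons (task_spread (code_cons c cs) xs) T) S)
      = pair (code_cons (task_spread cs xs) (code_cons (task_eval c xs) T)) S"
    and "step (pair (code_cons (task_apply g) T) (code_cons v S)) = pair (code_cons (task_eval g v) T) S"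
    and "step (pair (code_cons (task_prim h y xs) T) (code_cons (code_cons u v) S))
      = pair (code_cons (task_eval h (code_cons y (code_cons u xs))) T) (code_cons v S)"
    and "step (pair (code_cons (task_mu g y xs) T) (code_cons (code_cons 0 v) S))
      = pair T (code_cons (code_cons y v) S)"
    and "u \<noteq> 0 \<Longrightarrow> step (pair (code_cons (task_mu g y xs) T) (code_cons (code_cons u v) S))
      = pair (code_cons (task_eval g (code_cons (Suc y) xs)) (code_cons (task_mu g (Suc y) xs) T)) (code_cons v S)"
    and "step (pair 0 S) = pair 0 S"
  by (simp_all add: step_def task_step_def eval_step_def spread_step_def prim_step_def mu_step_def
      task_eval_def task_spread_def task_apply_def task_prim_def task_mu_def push_value_def drop_value_def
      code_zero_def code_succ_def code_proj_def code_comp_def code_prim_def code_mu_def)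

definition reaches :: "nat \<Rightarrow> nat \<Rightarrow> bool" where
  "reaches z z' \<longleftrightarrow> (\<exists>t. (step ^^ t) z = z')"

lemma reaches_trans [trans]: "reaches z z' \<Longrightarrow> reaches z' z'' \<Longrightarrow> reaches z z''"
  unfolding reaches_def by (metis funpow_add o_apply)

lemma reaches_step: "step z = z' \<Longrightarrow> reaches z z'"
  unfolding reaches_def by (intro exI[of _ 1]) simp

definition computes :: "nat \<Rightarrow> nat \<Rightarrow> (nat list \<Rightarrow> nat) \<Rightarrow> bool" where
  "computes n c f \<longleftrightarrow> (\<forall>xs T v S. length xs = n \<longrightarrow>
     reaches (pair (code_cons (task_eval c (list_encode xs)) T) (code_cons v S))
       (pair T (code_cons (code_cons (f xs) v) S)))"

lemma computesD:
  "computes n c f \<Longrightarrow> length xs = n \<Longrightarrow>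
   reaches (pair (code_cons (task_eval c (list_encode xs)) T) (code_cons v S))
     (pair T (code_cons (code_cons (f xs) v) S))"
  unfolding computes_def by blast

lemma reaches_spread:
  assumes "list_all2 (computes n) cs fs" "length xs = n"
  shows "reaches (pair (code_cons (task_spread (list_encode cs) (list_encode xs)) T) (code_cons (list_encode acc) S))
      (pair T (code_cons (list_encode (map (\<lambda>f. f xs) fs @ acc)) S))"
  using assms(1)
proof (induction arbitrary: T rule: list_all2_induct)
  case Nil
  show ?case by (simp add: reaches_step step_simps)
next
  case (Cons c cs f fs)
  have "reaches (pair (code_cons (task_spread (list_encode (c # cs)) (list_encode xs)) T) (code_cons (list_encode acc) S))
      (pair (code_cons (task_spread (list_encode cs) (list_encode xs)) (code_cons (task_eval c (list_encode xs)) T))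
        (code_cons (list_encode acc) S))"
    by (simp add: reaches_step step_simps)
  also have "reaches \<dots> (pair (code_cons (task_eval c (list_encode xs)) T)
      (code_cons (list_encode (map (\<lambda>f. f xs) fs @ acc)) S))"
    by (rule Cons.IH)
  also have "reaches \<dots> (pair T (code_cons (list_encode (map (\<lambda>f. f xs) (f # fs) @ acc)) S))"
    using computesD[OF Cons.hyps(1) assms(2)] by simp
  finally show ?case .
qed

lemma computes_comp:
  assumes g: "computes m cg g" and fs: "list_all2 (computes n) cs fs" and m: "length fs = m"
  shows "computes n (code_comp cg (list_encode cs)) (\<lambda>xs. g (map (\<lambda>f. f xs) fs))"
  unfolding computes_def
proof (intro allI impI)
  fix xs :: "nat list" and T v S assume xs: "length xs = n"
  let ?ys = "map (\<lambda>f. f xs) fs"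
  have "reaches (pair (code_cons (task_eval (code_comp cg (list_encode cs)) (list_encode xs)) T) (code_cons v S))
      (pair (code_cons (task_spread (list_encode cs) (list_encode xs)) (code_cons (task_apply cg) T))
        (code_cons (list_encode []) (code_cons v S)))"
    by (simp add: reaches_step step_simps)
  also have "reaches \<dots> (pair (code_cons (task_apply cg) T) (code_cons (list_encode (?ys @ [])) (code_cons v S)))"
    by (rule reaches_spread[OF fs xs])
  also have "reaches \<dots> (pair (code_cons (task_eval cg (list_encode ?ys)) T) (code_cons v S))"
    by (simp add: reaches_step step_simps)
  also have "reaches \<dots> (pair T (code_cons (code_cons (g ?ys) v) S))"
    using computesD[OF g] m by simp
  finally show "reaches (pair (code_cons (task_eval (code_comp cg (list_encode cs)) (list_encode xs)) T)
      (code_cons v S)) (pair T (code_cons (code_cons (g ?ys) v) S))" .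
qed

lemma computes_prim:
  assumes g: "computes n cg g" and h: "computes (Suc (Suc n)) ch h"
  shows "computes (Suc n) (code_prim cg ch) (\<lambda>xs. primrec_fn g h (hd xs) (tl xs))"
proof -
  have "reaches (pair (code_cons (task_eval (code_prim cg ch) (list_encode (y # xs))) T) (code_cons v S))
      (pair T (code_cons (code_cons (primrec_fn g h y xs) v) S))"
    if "length xs = n" for y xs T v S
  proof (induction y arbitrary: T v S)
    case 0
    have "reaches (pair (code_cons (task_eval (code_prim cg ch) (list_encode (0 # xs))) T) (code_cons v S))
        (pair (code_cons (task_eval cg (list_encode xs)) T) (code_cons v S))"
      by (simp add: reaches_step step_simps)
    also have "reaches \<dots> (pair T (code_cons (code_cons (primrec_fn g h 0 xs) v) S))"
      using computesD[OF g that] by simp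
    finally show ?case .
  next
    case (Suc y)
    let ?r = "primrec_fn g h y xs"
    have "reaches (pair (code_cons (task_eval (code_prim cg ch) (list_encode (Suc y # xs))) T) (code_cons v S))
        (pair (code_cons (task_eval (code_prim cg ch) (list_encode (y # xs)))
          (code_cons (task_prim ch y (list_encode xs)) T)) (code_cons v S))"
      by (simp add: reaches_step step_simps)
    also have "reaches \<dots> (pair (code_cons (task_prim ch y (list_encode xs)) T) (code_cons (code_cons ?r v) S))"
      by (rule Suc.IH)
    also have "reaches \<dots> (pair (code_cons (task_eval ch (list_encode (y # ?r # xs))) T) (code_cons v S))"
      by (simp add: reaches_step step_simps)
    also have "reaches \<dots> (pair T (code_cons (code_cons (primrec_fn g h (Suc y) xs) v) S))"
      using computesD[OF h, of "y # ?r # xs"] that by simp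
    finally show ?case .
  qed
  then show ?thesis
    unfolding computes_def by (auto simp: length_Suc_conv)
qed

lemma reaches_mu_search:
  assumes g: "computes (Suc n) cg g" and xs: "length xs = n"
    and found: "g (y0 # xs) = 0" and below: "\<And>y. y < y0 \<Longrightarrow> g (y # xs) \<noteq> 0"
    and "y \<le> y0"
  shows "reaches (pair (code_cons (task_eval cg (list_encode (y # xs)))
      (code_cons (task_mu cg y (list_encode xs)) T)) (code_cons v S)) (pair T (code_cons (code_cons y0 v) S))"
  using \<open>y \<le> y0\<close>
proof (induction y rule: inc_induct)
  case base
  have "reaches (pair (code_cons (task_eval cg (list_encode (y0 # xs))) (code_cons (task_mu cg y0 (list_encode xs)) T))
      (code_cons v S)) (pair (code_cons (task_mu cg y0 (list_encode xs)) T) (code_cons (code_cons 0 v) S))"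
    using computesD[OF g, of "y0 # xs"] xs found by simp
  also have "reaches \<dots> (pair T (code_cons (code_cons y0 v) S))"
    by (simp add: reaches_step step_simps)
  finally show ?case .
next
  case (step y)
  have "reaches (pair (code_cons (task_eval cg (list_encode (y # xs))) (code_cons (task_mu cg y (list_encode xs)) T))
      (code_cons v S)) (pair (code_cons (task_mu cg y (list_encode xs)) T) (code_cons (code_cons (g (y # xs)) v) S))"
    using computesD[OF g, of "y # xs"] xs by simp
  also have "reaches \<dots> (pair (code_cons (task_eval cg (list_encode (Suc y # xs)))
      (code_cons (task_mu cg (Suc y) (list_encode xs)) T)) (code_cons v S))"
    using below[OF step.hyps(2)] by (simp add: reaches_step step_simps)
  also have "reaches \<dots> (pair T (code_cons (code_cons y0 v) S))"
    by (rule step.IH)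
  finally show ?case .
qed

lemma computes_mu:
  assumes g: "computes (Suc n) cg g" and total: "\<forall>xs. length xs = n \<longrightarrow> (\<exists>y. g (y # xs) = 0)"
  shows "computes n (code_mu cg) (\<lambda>xs. LEAST y. g (y # xs) = 0)"
  unfolding computes_def
proof (intro allI impI)
  fix xs :: "nat list" and T v S assume xs: "length xs = n"
  define y0 where "y0 = (LEAST y. g (y # xs) = 0)"
  have found: "g (y0 # xs) = 0"
    unfolding y0_def by (rule LeastI_ex) (use total xs in blast)
  have below: "g (y # xs) \<noteq> 0" if "y < y0" for y
    using that unfolding y0_def by (rule not_less_Least)
  have "reaches (pair (code_cons (task_eval (code_mu cg) (list_encode xs)) T) (code_cons v S))
      (pair (code_cons (task_eval cg (list_encode (0 # xs))) (code_cons (task_mu cg 0 (list_encode xs)) T))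
        (code_cons v S))"
    by (simp add: reaches_step step_simps)
  also have "reaches \<dots> (pair T (code_cons (code_cons y0 v) S))"
    by (rule reaches_mu_search[OF g xs found below]) simp_all
  finally show "reaches (pair (code_cons (task_eval (code_mu cg) (list_encode xs)) T) (code_cons v S))
      (pair T (code_cons (code_cons (LEAST y. g (y # xs) = 0) v) S))"
    unfolding y0_def .
qed

theorem recfn_imp_computes: "recfn n f \<Longrightarrow> \<exists>c. computes n c f"
proof (induction rule: recfn.induct)
  case (rf_zero n)
  have "computes n code_zero (\<lambda>_. 0)"
    unfolding computes_def by (simp add: reaches_step step_simps)
  then show ?case ..
next
  case rf_succ
  have "computes 1 code_succ (\<lambda>xs. Suc (hd xs))"
    unfolding computes_def by (auto simp: length_Suc_conv reaches_step step_simps)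
  then show ?case ..
next
  case (rf_proj i n)
  then have "computes n (code_proj i) (\<lambda>xs. xs ! i)"
    unfolding computes_def by (simp add: reaches_step step_simps code_nth_list_encode)
  then show ?case ..
next
  case (rf_comp m g fs n)
  obtain cg where "computes m cg g" using rf_comp.IH(1) ..
  moreover obtain cs where "list_all2 (computes n) cs fs"
  proof -
    have "\<forall>i<m. \<exists>c. computes n c (fs ! i)" using rf_comp.IH(2) by blast
    then obtain c where "\<forall>i<m. computes n (c i) (fs ! i)" by metis
    then have "list_all2 (computes n) (map c [0..<m]) fs"
      using rf_comp.hyps(2) by (auto intro: list_all2_all_nthI)
    then show ?thesis by (rule that)
  qed
  ultimately show ?case using computes_comp rf_comp.hyps(2) by blast
next
  case (rf_prim n g h)
  then show ?case using computes_prim by blast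
next
  case (rf_mu n g)
  then show ?case using computes_mu by blast
next
  case (rf_ext n f f')
  then show ?case unfolding computes_def by auto
qed

section \<open>Recursively inseparable halting sets\<close>

definition initial :: "nat \<Rightarrow> nat \<Rightarrow> nat" where
  "initial c x = pair (code_cons (task_eval c (list_encode [x])) 0) (code_cons 0 0)"

definition halts_with :: "nat \<Rightarrow> nat \<Rightarrow> nat \<Rightarrow> bool" where
  "halts_with v c k \<longleftrightarrow>
    unpair1 ((step ^^ k) (initial c c)) = 0 \<and> code_hd (code_hd (unpair2 ((step ^^ k) (initial c c)))) = v"

lemma halted_stays: "(step ^^ k) (pair 0 S) = pair 0 S"
  by (induction k) (simp_all add: step_simps)

lemma halted_unique:
  assumes "(step ^^ t) z = pair 0 S" and "unpair1 ((step ^^ k) z) = 0"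
  shows "(step ^^ k) z = pair 0 S"
proof (cases "k \<le> t")
  case True
  have halted: "(step ^^ k) z = pair 0 (unpair2 ((step ^^ k) z))"
    using assms(2) by (metis prod.collapse prod_decode_inverse)
  have "(step ^^ t) z = (step ^^ (t - k)) ((step ^^ k) z)"
    using True by (metis funpow_add le_add_diff_inverse2 o_apply)
  also have "\<dots> = (step ^^ k) z"
    by (metis halted halted_stays)
  finally show ?thesis using assms(1) by simp
next
  case False
  then have "(step ^^ k) z = (step ^^ (k - t)) ((step ^^ t) z)"
    by (metis funpow_add le_add_diff_inverse2 nat_le_linear o_apply)
  then show ?thesis using assms(1) by (simp add: halted_stays)
qed

lemma halts_with_unique: "halts_with v c k \<Longrightarrow> halts_with v' c k' \<Longrightarrow> v = v'"
  unfolding halts_with_def by (metis halted_unique prod.collapse prod_decode_inverse)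

lemma computes_halts_with:
  assumes "computes 1 c f"
  shows "(\<exists>k. halts_with v c k) \<longleftrightarrow> f [c] = v"
proof -
  obtain t where t: "(step ^^ t) (initial c c) = pair 0 (code_cons (code_cons (f [c]) 0) 0)"
    using computesD[OF assms, of "[c]" 0 0 0] unfolding initial_def reaches_def by auto
  then have "halts_with (f [c]) c t"
    unfolding halts_with_def by simp
  moreover have "v = f [c]" if "halts_with v c k" for k
  proof -
    have "(step ^^ k) (initial c c) = pair 0 (code_cons (code_cons (f [c]) 0) 0)"
      using that halted_unique[OF t] unfolding halts_with_def by blast
    then show ?thesis using that unfolding halts_with_def by simp
  qed
  ultimately show ?thesis by blast
qed

lemma recfn_halts_with: "recfn 2 (\<lambda>xs. of_bool (halts_with v (xs!0) (xs!1)))"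
proof -
  have "recfn 2 (\<lambda>xs. if unpair1 ((step ^^ xs!1) (initial (xs!0) (xs!0))) = 0 then
      if code_hd (code_hd (unpair2 ((step ^^ xs!1) (initial (xs!0) (xs!0))))) = v then 1 else 0 else 0)"
    unfolding initial_def task_eval_def list_encode.simps
    by (intro recfn_if_zero recfn_if_eq recfn_unpair1 recfn_unpair2 recfn_pred recfn_funpow[OF recfn_step]
        recfn_prod_encode recfn_Suc recfn_const rf_proj) simp_all
  then show ?thesis
    unfolding halts_with_def by (rule rf_ext) simp
qed

theorem halting_sets_recursively_inseparable:
  assumes "recfn 1 (\<lambda>xs. of_bool (A (xs!0)))"
    and "\<And>c k. halts_with 1 c k \<Longrightarrow> \<not> A c" and "\<And>c k. halts_with 0 c k \<Longrightarrow> A c"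
  shows False
proof -
  obtain c where c: "computes 1 c (\<lambda>xs. of_bool (A (xs!0)))"
    using recfn_imp_computes[OF assms(1)] ..
  show False
  proof (cases "A c")
    case True
    then show False using assms(2) computes_halts_with[OF c, of 1] by auto
  next
    case False
    then show False using assms(3) computes_halts_with[OF c, of 0] by auto
  qed
qed

section \<open>Computable real sequences\<close>

lemma recursive2_const: "recursive2 (\<lambda>_ _. c)"
  unfolding recursive2_def by (rule recfn_const)

lemma recursive2_pow2_minus_1: "recursive2 (\<lambda>_ k. 2 ^ k - 1)"
proof -
  have "((\<lambda>z. z + z) ^^ k) 1 = (2::nat) ^ k" for k
    by (induction k) auto
  moreover have "recfn 2 (\<lambda>xs. ((\<lambda>z. z + z) ^^ (xs!1)) 1 - 1)"
    by (intro recfn_diff recfn_funpow recfn_add recfn_const rf_proj) simp_all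
  ultimately show ?thesis
    unfolding recursive2_def by simp
qed

lemma computable_seq_const: "computable_seq (\<lambda>_. rat_code s a b)"
  unfolding computable_seq_def
  by (intro exI[of _ "\<lambda>_ _. s"] exI[of _ "\<lambda>_ _. a"] exI[of _ "\<lambda>_ _. b"] exI[of _ "\<lambda>_ _. 0"])
    (simp add: recursive2_const)

lemma computable_seq_imp_computable_real:
  assumes "computable_seq x"
  shows "computable_real (x n)"
proof -
  obtain s a b e where rec: "recursive2 s" "recursive2 a" "recursive2 b" "recursive2 e"
    and approx: "\<forall>m N k. e m N \<le> k \<longrightarrow> \<bar>x m - rat_code (s m k) (a m k) (b m k)\<bar> \<le> 1 / 2 ^ N"
    using assms unfolding computable_seq_def by blast
  have fix_first: "recursive2 (\<lambda>_ k. f n k)" if "recursive2 f" for f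
    unfolding recursive2_def by (rule recursive2_compose[OF that recfn_const rf_proj]) simp
  show ?thesis
    unfolding computable_real_def computable_seq_def
    by (intro exI[of _ "\<lambda>_ k. s n k"] exI[of _ "\<lambda>_ k. a n k"] exI[of _ "\<lambda>_ k. b n k"]
        exI[of _ "\<lambda>_ k. e n k"]) (use rec approx fix_first in auto)
qed

lemma recfn_mod_2: "recfn n f \<Longrightarrow> recfn n (\<lambda>xs. f xs mod 2)"
proof (rule recfn_compose1[where g = "\<lambda>k. k mod 2"])
  have "recfn 1 (\<lambda>ys. ((\<lambda>z. 1 - z) ^^ (ys!0)) 0)"
    by (intro recfn_funpow recfn_diff recfn_const rf_proj) simp_all
  moreover have "((\<lambda>z. 1 - z) ^^ k) 0 = k mod 2" for k :: nat
    by (induction k) (auto simp: mod_Suc)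
  ultimately show "recfn 1 (\<lambda>ys. ys!0 mod 2)" by simp
qed

lemma rat_code_ge_half_iff: "1/2 \<le> rat_code s a b \<longleftrightarrow> even s \<and> Suc b \<le> 2 * a"
proof (cases "even s")
  case True
  then have "rat_code s a b = real a / real (Suc b)"
    unfolding rat_code_def by simp
  moreover have "1/2 \<le> real a / real (Suc b) \<longleftrightarrow> real (Suc b) \<le> real (2 * a)"
    by (simp add: field_simps del: of_nat_Suc)
  ultimately show ?thesis
    using True by (simp only: of_nat_le_iff) simp
next
  case False
  then have "rat_code s a b \<le> 0"
    unfolding rat_code_def by simp
  then show ?thesis
    using False by simp
qed

lemma computable_seq_distinguishes_0_1:
  assumes "computable_seq w"
  obtains A where "recfn 1 (\<lambda>xs. of_bool (A (xs!0)))"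
    and "\<And>n. w n = 0 \<Longrightarrow> \<not> A n" and "\<And>n. w n = 1 \<Longrightarrow> A n"
proof -
  obtain s a b e where rec: "recursive2 s" "recursive2 a" "recursive2 b" "recursive2 e"
    and approx: "\<forall>n N k. e n N \<le> k \<longrightarrow> \<bar>w n - rat_code (s n k) (a n k) (b n k)\<bar> \<le> 1 / 2 ^ N"
    using assms unfolding computable_seq_def by blast
  define r where "r n = rat_code (s n (e n 2)) (a n (e n 2)) (b n (e n 2))" for n
  have close: "\<bar>w n - r n\<bar> \<le> 1/4" for n
    using approx[rule_format, of n 2 "e n 2"] unfolding r_def by simp
  have "recfn 1 (\<lambda>xs. if s (xs!0) (e (xs!0) 2) mod 2 = 0 then
      if Suc (b (xs!0) (e (xs!0) 2)) - (a (xs!0) (e (xs!0) 2) + a (xs!0) (e (xs!0) 2)) = 0 then 1 else 0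
      else 0)"
    by (intro recfn_if_zero recfn_mod_2 recfn_diff recfn_Suc recfn_add recfn_const rf_proj
        recursive2_compose[OF rec(1)] recursive2_compose[OF rec(2)] recursive2_compose[OF rec(3)]
        recursive2_compose[OF rec(4)]) simp_all
  then have "recfn 1 (\<lambda>xs. of_bool (1/2 \<le> r (xs!0)))"
    unfolding r_def rat_code_ge_half_iff by (rule rf_ext) (auto simp: even_iff_mod_2_eq_zero mult_2)
  moreover have "\<not> 1/2 \<le> r n" if "w n = 0" for n
    using close[of n] that by simp
  moreover have "1/2 \<le> r n" if "w n = 1" for n
    using close[of n] that by (simp only: abs_le_iff) linarith
  ultimately show ?thesis by (rule that)
qed

definition binary_series :: "(nat \<Rightarrow> nat \<Rightarrow> bool) \<Rightarrow> nat \<Rightarrow> real" where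
  "binary_series P n = (\<Sum>k. (1/2)^Suc k * of_bool (P n k))"

fun binary_numerator :: "(nat \<Rightarrow> nat \<Rightarrow> bool) \<Rightarrow> nat \<Rightarrow> nat \<Rightarrow> nat" where
  "binary_numerator P n 0 = 0"
| "binary_numerator P n (Suc k) = binary_numerator P n k + binary_numerator P n k + of_bool (P n k)"

lemma binary_numerator_eq_partial_sum:
  "real (binary_numerator P n k) / 2^k = (\<Sum>j<k. (1/2)^Suc j * of_bool (P n j))"
proof (induction k)
  case (Suc k)
  have "real (binary_numerator P n (Suc k)) / 2^Suc k
      = real (binary_numerator P n k) / 2^k + (1/2)^Suc k * of_bool (P n k)"
    by (simp add: field_simps)
  then show ?case using Suc by simp
qed simp

lemma recursive2_binary_numerator:
  assumes "recfn 2 (\<lambda>xs. of_bool (P (xs!0) (xs!1)))"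
  shows "recursive2 (binary_numerator P)"
proof -
  have step: "recfn 3 (\<lambda>ys. ys!1 + ys!1 + of_bool (P (ys!2) (ys!0)))"
    by (intro recfn_add recfn_compose2[OF assms] rf_proj) simp_all
  have unfold: "primrec_fn (\<lambda>_. 0) (\<lambda>ys. ys!1 + ys!1 + of_bool (P (ys!2) (ys!0))) k [n]
      = binary_numerator P n k" for k n
    by (induction k) auto
  have "recfn 2 (\<lambda>ys. binary_numerator P (ys!1) (ys!0))"
  proof (rule recfn_primrec_eq[where n = 1, OF rf_zero step])
    fix xs :: "nat list" assume "length xs = 2"
    then show "binary_numerator P (xs!1) (xs!0)
        = primrec_fn (\<lambda>_. 0) (\<lambda>ys. ys!1 + ys!1 + of_bool (P (ys!2) (ys!0))) (hd xs) (tl xs)"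
      by (cases rule: length_2_cases) (simp add: unfold[simplified])
  qed simp_all
  then have "recfn 2 (\<lambda>xs. binary_numerator P (xs!0) (xs!1))"
    by (rule recfn_compose2[where g = "\<lambda>a b. binary_numerator P b a"]) (simp_all add: rf_proj)
  then show ?thesis
    unfolding recursive2_def .
qed

lemma summable_binary_series: "summable (\<lambda>k. (1/2::real)^Suc k * of_bool (P n k))"
  by (rule summable_comparison_test[OF _ sums_summable[OF power_half_series]]) auto

lemma binary_series_nonneg: "0 \<le> binary_series P n"
  unfolding binary_series_def by (intro suminf_nonneg summable_binary_series) simp

lemma binary_series_pos_iff: "0 < binary_series P n \<longleftrightarrow> (\<exists>k. P n k)"
  unfolding binary_series_def by (subst suminf_pos_iff[OF summable_binary_series]) auto

lemma binary_series_approx: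
  "\<bar>binary_series P n - real (binary_numerator P n k) / 2^k\<bar> \<le> (1/2)^k"
proof -
  let ?f = "\<lambda>j. (1/2::real)^Suc j * of_bool (P n j)"
  have "binary_series P n = (\<Sum>j. ?f (j + k)) + (\<Sum>j<k. ?f j)"
    unfolding binary_series_def by (rule suminf_split_initial_segment[OF summable_binary_series])
  then have tail: "binary_series P n - real (binary_numerator P n k) / 2^k = (\<Sum>j. ?f (j + k))"
    by (simp add: binary_numerator_eq_partial_sum)
  have "(\<Sum>j. ?f (j + k)) \<le> (1/2)^k * 1"
  proof (rule sums_le)
    show "?f (j + k) \<le> (1/2)^k * (1/2)^Suc j" for j
      by (simp add: power_add)
    show "(\<lambda>j. ?f (j + k)) sums (\<Sum>j. ?f (j + k))"
      by (intro summable_sums summable_ignore_initial_segment summable_binary_series)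
    show "(\<lambda>j. (1/2::real)^k * (1/2)^Suc j) sums ((1/2)^k * 1)"
      by (rule sums_mult[OF power_half_series])
  qed
  moreover have "0 \<le> (\<Sum>j. ?f (j + k))"
    by (intro suminf_nonneg summable_ignore_initial_segment summable_binary_series) simp
  ultimately show ?thesis
    unfolding tail by simp
qed

lemma computable_seq_binary_series:
  assumes "recfn 2 (\<lambda>xs. of_bool (P (xs!0) (xs!1)))"
  shows "computable_seq (binary_series P)"
  unfolding computable_seq_def
proof (intro exI conjI allI impI)
  show "recursive2 (\<lambda>_ _. 0)" by (rule recursive2_const)
  show "recursive2 (binary_numerator P)" by (rule recursive2_binary_numerator[OF assms])
  show "recursive2 (\<lambda>_ k. 2 ^ k - 1)" by (rule recursive2_pow2_minus_1)
  show "recursive2 (\<lambda>_ N. N)" unfolding recursive2_def by (rule rf_proj) simp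
  fix n N k :: nat assume "N \<le> k"
  have "rat_code 0 (binary_numerator P n k) (2 ^ k - 1) = real (binary_numerator P n k) / 2^k"
    unfolding rat_code_def by simp
  then have "\<bar>binary_series P n - rat_code 0 (binary_numerator P n k) (2 ^ k - 1)\<bar> \<le> (1/2)^k"
    using binary_series_approx by simp
  also have "\<dots> \<le> (1/2)^N"
    using \<open>N \<le> k\<close> by (rule power_decreasing) auto
  finally show "\<bar>binary_series P n - rat_code 0 (binary_numerator P n k) (2 ^ k - 1)\<bar> \<le> 1 / 2^N"
    by (simp add: power_one_over)
qed

theorem computable_seqs_inseparable:
  obtains \<alpha> \<beta> :: "nat \<Rightarrow> real"
  where "computable_seq \<alpha>" "computable_seq \<beta>" "\<And>n. 0 \<le> \<alpha> n" "\<And>n. 0 \<le> \<beta> n"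
    and "\<And>n. \<alpha> n = 0 \<or> \<beta> n = 0"
    and "\<And>w. computable_seq w \<Longrightarrow> (\<And>n. 0 < \<alpha> n \<Longrightarrow> w n = 0) \<Longrightarrow> (\<And>n. 0 < \<beta> n \<Longrightarrow> w n = 1)
      \<Longrightarrow> False"
proof
  let ?\<alpha> = "binary_series (halts_with 1)" and ?\<beta> = "binary_series (halts_with 0)"
  show "computable_seq ?\<alpha>" "computable_seq ?\<beta>"
    by (intro computable_seq_binary_series recfn_halts_with)+
  show "0 \<le> ?\<alpha> n" "0 \<le> ?\<beta> n" for n
    by (rule binary_series_nonneg)+
  show "?\<alpha> n = 0 \<or> ?\<beta> n = 0" for n
  proof (rule ccontr)
    assume "\<not> (?\<alpha> n = 0 \<or> ?\<beta> n = 0)"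
    then have "0 < ?\<alpha> n" "0 < ?\<beta> n"
      using binary_series_nonneg[of _ n] by (simp_all add: less_le)
    then obtain k k' where "halts_with 1 n k" "halts_with 0 n k'"
      by (auto simp: binary_series_pos_iff)
    then show False
      using halts_with_unique by force
  qed
  fix w assume w: "computable_seq w"
    and w0: "\<And>n. 0 < ?\<alpha> n \<Longrightarrow> w n = 0" and w1: "\<And>n. 0 < ?\<beta> n \<Longrightarrow> w n = 1"
  obtain A where A: "recfn 1 (\<lambda>xs. of_bool (A (xs!0)))"
    and A0: "\<And>n. w n = 0 \<Longrightarrow> \<not> A n" and A1: "\<And>n. w n = 1 \<Longrightarrow> A n"
    using computable_seq_distinguishes_0_1[OF w] by blast
  show False
  proof (rule halting_sets_recursively_inseparable[OF A])
    show "\<not> A c" if "halts_with 1 c k" for c k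
      using that by (intro A0 w0) (auto simp: binary_series_pos_iff)
    show "A c" if "halts_with 0 c k" for c k
      using that by (intro A1 w1) (auto simp: binary_series_pos_iff)
  qed
qed

section \<open>Optimal test channels at distortion level zero\<close>

lemma log_ratio_lower_bound:
  assumes "0 < a" "0 < b"
  shows "(a - b) / ln 2 \<le> a * log 2 (a / b)"
proof -
  have "ln (b / a) \<le> b / a - 1"
    using assms by (intro ln_le_minus_one) simp
  then have "a * (1 - b / a) \<le> a * ln (a / b)"
    using assms by (intro mult_left_mono) (simp_all add: ln_div)
  moreover have "a * (1 - b / a) = a - b"
    using assms by (simp add: field_simps)
  ultimately have "a - b \<le> a * ln (a / b)"
    by simp
  then show ?thesis
    by (simp add: log_def divide_right_mono)
qed

lemma sum_out_dist:
  assumes "is_pmf P" "test_channel W"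
  shows "(\<Sum>y\<in>UNIV. out_dist P W y) = 1"
proof -
  have "(\<Sum>y\<in>UNIV. out_dist P W y) = (\<Sum>x\<in>UNIV. P x * (\<Sum>y\<in>UNIV. W x y))"
    unfolding out_dist_def by (subst sum.swap) (simp add: sum_distrib_left)
  then show ?thesis
    using assms unfolding is_pmf_def test_channel_def by simp
qed

lemma joint_le_out_dist:
  assumes "is_pmf P" "test_channel W"
  shows "P x * W x y \<le> out_dist P W y"
  unfolding out_dist_def using assms unfolding is_pmf_def test_channel_def
  by (intro member_le_sum[where f = "\<lambda>x. P x * W x y"]) auto

lemma mutual_info_nonneg:
  assumes P: "is_pmf P" and W: "test_channel W"
  shows "0 \<le> mutual_info P W"
proof -
  let ?q = "out_dist P W"
  have term_bound: "(P x * W x y - P x * ?q y) / ln 2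
      \<le> (if P x * W x y = 0 then 0 else P x * W x y * log 2 (W x y / ?q y))" for x y
  proof (cases "P x * W x y = 0")
    case True
    have "0 \<le> P x * ?q y"
      using P W joint_le_out_dist[OF P W, of x] unfolding is_pmf_def test_channel_def
      by (meson mult_nonneg_nonneg order_trans)
    with True have "(P x * W x y - P x * ?q y) / ln 2 \<le> 0"
      by (intro divide_nonpos_pos) (linarith, simp)
    with True show ?thesis by simp
  next
    case False
    then have "0 < P x" "0 < W x y"
      using P W unfolding is_pmf_def test_channel_def by (auto simp: less_le)
    moreover have "0 < ?q y"
      using joint_le_out_dist[OF P W, of x y] \<open>0 < P x\<close> \<open>0 < W x y\<close> by (smt (verit) mult_pos_pos)
    ultimately have "(P x * W x y - P x * ?q y) / ln 2 \<le> P x * W x y * log 2 (P x * W x y / (P x * ?q y))"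
      by (intro log_ratio_lower_bound) simp_all
    with False \<open>0 < P x\<close> show ?thesis by simp
  qed
  have "(\<Sum>x\<in>UNIV. \<Sum>y\<in>UNIV. (P x * W x y - P x * ?q y) / ln 2)
      = ((\<Sum>x\<in>UNIV. P x * (\<Sum>y\<in>UNIV. W x y)) - (\<Sum>x\<in>UNIV. P x * (\<Sum>y\<in>UNIV. ?q y))) / ln 2"
    by (simp add: sum_divide_distrib[symmetric] sum_subtractf sum_distrib_left)
  also have "\<dots> = 0"
    using P W sum_out_dist[OF P W] unfolding is_pmf_def test_channel_def by simp
  finally have "0 = (\<Sum>x\<in>UNIV. \<Sum>y\<in>UNIV. (P x * W x y - P x * ?q y) / ln 2)" ..
  also have "\<dots> \<le> mutual_info P W"
    unfolding mutual_info_def by (intro sum_mono term_bound)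
  finally show ?thesis .
qed

definition const_channel :: "'y \<Rightarrow> 'x \<Rightarrow> 'y \<Rightarrow> real" where
  "const_channel y0 x y = (if y = y0 then 1 else 0)"

lemma test_channel_const_channel: "test_channel (const_channel y0 :: 'x::finite \<Rightarrow> 'y::finite \<Rightarrow> real)"
  unfolding test_channel_def const_channel_def by simp

lemma mutual_info_const_channel:
  assumes "is_pmf P"
  shows "mutual_info P (const_channel y0 :: 'x::finite \<Rightarrow> 'y::finite \<Rightarrow> real) = 0"
proof -
  have "out_dist P (const_channel y0) y = (if y = y0 then 1 else 0)" for y
    using assms unfolding out_dist_def const_channel_def is_pmf_def by auto
  then show ?thesis
    unfolding mutual_info_def by (intro sum.neutral ballI) (auto simp: const_channel_def)
qed

lemma avg_distortion_const_channel:
  "avg_distortion P (const_channel y0 :: 'x::finite \<Rightarrow> 'y::finite \<Rightarrow> real) d = (\<Sum>x\<in>UNIV. P x * d x y0)"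
proof -
  have "(\<Sum>y\<in>UNIV. P x * const_channel y0 x y * d x y) = (\<Sum>y\<in>UNIV. if y = y0 then P x * d x y else 0)"
    for x
    by (rule sum.cong) (simp_all add: const_channel_def)
  then show ?thesis
    unfolding avg_distortion_def by simp
qed

lemma const_channel_in_P_opt:
  assumes "is_pmf P" and "\<And>x. d x y0 = 0"
  shows "const_channel y0 \<in> P_opt d 0 P"
  unfolding P_opt_def
proof (intro CollectI conjI allI impI)
  show "test_channel (const_channel y0)"
    by (rule test_channel_const_channel)
  show "avg_distortion P (const_channel y0) d \<le> 0"
    using assms(2) by (simp add: avg_distortion_const_channel)
  fix W assume "test_channel W \<and> avg_distortion P W d \<le> 0"
  then have "0 \<le> mutual_info P W"
    using mutual_info_nonneg[OF assms(1)] by blast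
  then show "mutual_info P (const_channel y0) \<le> mutual_info P W"
    using mutual_info_const_channel[OF assms(1), of y0] by simp
qed

lemma P_opt_zero_vanishes:
  assumes W: "W \<in> P_opt d 0 P" and P: "\<And>x. 0 \<le> P x" and d: "\<And>x y. 0 \<le> d x y"
    and pos: "0 < P x" "0 < d x y"
  shows "W x y = 0"
proof -
  have W_nonneg: "0 \<le> W x' y'" for x' y'
    using W unfolding P_opt_def test_channel_def by blast
  have terms_nonneg: "0 \<le> P x' * W x' y' * d x' y'" for x' y'
    using P d W_nonneg by simp
  have rows_nonneg: "0 \<le> (\<Sum>y'\<in>UNIV. P x' * W x' y' * d x' y')" for x'
    using terms_nonneg by (rule sum_nonneg)
  have "avg_distortion P W d \<le> 0"
    using W unfolding P_opt_def by blast
  then have "(\<Sum>x'\<in>UNIV. \<Sum>y'\<in>UNIV. P x' * W x' y' * d x' y') = 0"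
    unfolding avg_distortion_def using rows_nonneg by (meson antisym sum_nonneg)
  then have "(\<Sum>y'\<in>UNIV. P x * W x y' * d x y') = 0"
    using rows_nonneg by (simp only: sum_nonneg_eq_0_iff finite UNIV_I simp_thms)
  then have "P x * W x y * d x y = 0"
    using terms_nonneg by (simp only: sum_nonneg_eq_0_iff finite UNIV_I simp_thms)
  then show ?thesis
    using pos by simp
qed

lemma test_channel_concentrated:
  assumes "test_channel W" and "\<And>y. y \<noteq> y0 \<Longrightarrow> W x y = 0"
  shows "W x y0 = 1"
proof -
  have "(\<Sum>y\<in>UNIV. W x y) = W x y0"
    using assms(2) by (subst sum.remove[of _ y0]) (simp_all add: sum.neutral)
  then show ?thesis
    using assms(1) unfolding test_channel_def by simp
qed

section \<open>The reduction\<close>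

definition two_point_pmf :: "'x \<Rightarrow> 'x \<Rightarrow> 'x \<Rightarrow> real" where
  "two_point_pmf x0 x1 x = (if x = x0 \<or> x = x1 then 1/2 else 0)"

text \<open>When exactly one of \<open>a, b\<close> is positive, optimal test channels at level \<open>0\<close>
  must avoid that letter and use the other one, so they reveal which of \<open>a, b\<close> vanishes.\<close>
definition switch_distortion :: "'y \<Rightarrow> 'y \<Rightarrow> real \<Rightarrow> real \<Rightarrow> 'x \<Rightarrow> 'y \<Rightarrow> real" where
  "switch_distortion y0 y1 a b x y = (if y = y0 then a else if y = y1 then b else 1)"

lemma is_pmf_two_point_pmf:
  assumes "x0 \<noteq> x1"
  shows "is_pmf (two_point_pmf x0 x1 :: 'x::finite \<Rightarrow> real)"
proof -
  have "(\<Sum>x\<in>UNIV. two_point_pmf x0 x1 x) = (\<Sum>x\<in>{x0, x1}. 1/2)"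
    unfolding two_point_pmf_def by (rule sum.mono_neutral_cong_right) auto
  then show ?thesis
    using assms unfolding is_pmf_def two_point_pmf_def by simp
qed

lemma computable_real_rat_code: "computable_real (rat_code s a b)"
  unfolding computable_real_def by (rule computable_seq_const)

lemma admissible_switch_distortion:
  fixes x0 x1 :: "'x::finite" and y0 y1 :: "'y::finite"
  assumes "x0 \<noteq> x1" "y0 \<noteq> y1" and "0 \<le> a" "0 \<le> b" "a = 0 \<or> b = 0"
    and "computable_real a" "computable_real b"
  shows "admissible_input (two_point_pmf x0 x1) (switch_distortion y0 y1 a b :: 'x \<Rightarrow> 'y \<Rightarrow> real) 0"
proof -
  have "computable_real 0" "computable_real (1/2)" "computable_real 1"
    using computable_real_rat_code[of 0 0 0] computable_real_rat_code[of 0 1 1]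
      computable_real_rat_code[of 0 1 0] by (simp_all add: rat_code_def)
  moreover have "\<exists>y'. \<forall>x. switch_distortion y0 y1 a b x y' = 0"
    using assms(2,5) unfolding switch_distortion_def by metis
  then have "P_opt (switch_distortion y0 y1 a b) 0 (two_point_pmf x0 x1) \<noteq> {}"
    using const_channel_in_P_opt[OF is_pmf_two_point_pmf[OF assms(1)]] by blast
  ultimately show ?thesis
    using assms is_pmf_two_point_pmf[OF assms(1)]
    unfolding admissible_input_def nontrivial_pmf_def two_point_pmf_def switch_distortion_def
    by auto
qed

lemma computable_seq_two_point_pmf: "computable_seq (\<lambda>_. two_point_pmf x0 x1 x)"
  using computable_seq_const[of 0 1 1] computable_seq_const[of 0 0 0]
  unfolding two_point_pmf_def by (cases "x = x0 \<or> x = x1") (simp_all add: rat_code_def)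

lemma computable_seq_switch_distortion:
  assumes "computable_seq \<alpha>" "computable_seq \<beta>"
  shows "computable_seq (\<lambda>n. switch_distortion y0 y1 (\<alpha> n) (\<beta> n) x y)"
  using assms computable_seq_const[of 0 1 0]
  unfolding switch_distortion_def by (cases "y = y0"; cases "y = y1") (simp_all add: rat_code_def)

lemma optimal_channel_switch_distortion:
  fixes x0 x1 :: "'x::finite" and y0 y1 :: "'y::finite"
  assumes W: "W \<in> P_opt (switch_distortion y0 y1 a b) 0 (two_point_pmf x0 x1)"
    and "y0 \<noteq> y1" "0 \<le> a" "0 \<le> b"
  shows "0 < a \<Longrightarrow> W x0 y0 = 0" and "0 < b \<Longrightarrow> W x0 y0 = 1"
proof -
  have P: "0 \<le> two_point_pmf x0 x1 x" "0 < two_point_pmf x0 x1 x0" for x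
    unfolding two_point_pmf_def by simp_all
  have d: "0 \<le> switch_distortion y0 y1 a b x y" for x y
    using assms(3,4) unfolding switch_distortion_def by simp
  show "W x0 y0 = 0" if "0 < a"
    using P_opt_zero_vanishes[OF W P(1) d P(2)] that unfolding switch_distortion_def by simp
  show "W x0 y0 = 1" if "0 < b"
  proof (rule test_channel_concentrated)
    show "test_channel W"
      using W unfolding P_opt_def by blast
    show "W x0 y = 0" if "y \<noteq> y0" for y
      using P_opt_zero_vanishes[OF W P(1) d P(2)] \<open>y \<noteq> y0\<close> \<open>0 < b\<close>
      unfolding switch_distortion_def by (simp split: if_splits)
  qed
qed

lemma obtain_two_elements:
  assumes "card (UNIV :: 'a set) \<ge> 2"
  obtains a b :: 'a where "a \<noteq> b"
proof -
  have "finite (UNIV :: 'a set)"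
    using assms by (intro card_ge_0_finite) simp
  then show ?thesis
    using assms that card_le_Suc0_iff_eq[of "UNIV :: 'a set"] by auto
qed

theorem mainTheorem1:
  fixes F :: "('x::finite \<Rightarrow> real) \<Rightarrow> ('x \<Rightarrow> 'y::finite \<Rightarrow> real) \<Rightarrow> real \<Rightarrow> ('x \<Rightarrow> 'y \<Rightarrow> real)"
  assumes "card (UNIV :: 'x set) \<ge> 2" and "card (UNIV :: 'y set) \<ge> 2"
    and "F \<in> M_opt"
  shows "\<not> BM_computable F"
proof
  assume BM: "BM_computable F"
  obtain x0 x1 :: 'x where x01: "x0 \<noteq> x1" using assms(1) by (rule obtain_two_elements)
  obtain y0 y1 :: 'y where y01: "y0 \<noteq> y1" using assms(2) by (rule obtain_two_elements)
  obtain \<alpha> \<beta> where c: "computable_seq \<alpha>" "computable_seq \<beta>" and nonneg: "\<And>n. 0 \<le> \<alpha> n" "\<And>n. 0 \<le> \<beta> n"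
    and excl: "\<And>n. \<alpha> n = 0 \<or> \<beta> n = 0"
    and insep: "\<And>w. computable_seq w \<Longrightarrow> (\<And>n. 0 < \<alpha> n \<Longrightarrow> w n = 0) \<Longrightarrow> (\<And>n. 0 < \<beta> n \<Longrightarrow> w n = 1)
      \<Longrightarrow> False"
    using computable_seqs_inseparable by blast
  let ?P = "two_point_pmf x0 x1" and ?d = "\<lambda>n. switch_distortion y0 y1 (\<alpha> n) (\<beta> n)"
  have adm: "admissible_input ?P (?d n) 0" for n
    using x01 y01 nonneg excl c by (intro admissible_switch_distortion computable_seq_imp_computable_real)
  have zero: "computable_seq (\<lambda>_. 0)"
    using computable_seq_const[of 0 0 0] by (simp add: rat_code_def)
  have "computable_seq (\<lambda>n. F ?P (?d n) 0 x0 y0)"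
    by (intro BM[unfolded BM_computable_def, rule_format, of "\<lambda>_. ?P" ?d "\<lambda>_. 0"] conjI allI adm
        computable_seq_two_point_pmf computable_seq_switch_distortion c zero)
  moreover have opt: "F ?P (?d n) 0 \<in> P_opt (?d n) 0 ?P" for n
    using assms(3) adm unfolding M_opt_def by blast
  ultimately show False
    using insep optimal_channel_switch_distortion[OF opt y01 nonneg] by blast
qed

end
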